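(* Let $(P,e)$, $P\in\mathcal{T}_k$, be a friendly tree pattern, let $\sigma(P,e)=(\tau(P),C)$ be its associated mesh pattern, let $i$ be the position of the largest value $k$ in $\tau(P)$, and let $\sigma^-(P,e)=(\tau(P),C\setminus\{(i-1,k)\})$. Then for every $n\ge 0$, $S_n(231,\sigma(P,e))=S_n(231,\sigma^-(P,e))$.
   Context: Binary trees: $\mathcal{T}_k$ is the set of binary trees on $k$ vertices labeled $1,\dots,k$ by the search tree property. $c_L(i),c_R(i),p(i)$: left child, right child, parent ($\varepsilon$ if nonexistent); $r(P)$ root; $P(i)$ subtree rooted at $i$; $L(i),R(i)$ subtrees rooted at $c_L(i),c_R(i)$. $B_R(i)=\{i,c_R(i),c_R^2(i),\dots\}$ is the vertex set of the right branch starting at $i$; $B_R^-(i)$ is $B_R(i)$ minus its last vertex. A tree pattern is $(P,e)$ with $e\colon[k]\setminus\{r(P)\}\to\{0,1\}$. Preorder: $\tau(\varepsilon)=$ empty, $\tau(P)=(r(P),\tau(L(P)),\tau(R(P)))$. $(P,e)$ is friendly if: (i) $p(k)\neq\varepsilon$ and $c_L(k)\neq\varepsilon$; (ii) $e(j)=0$ for all $j\in B_R^-(r(P))\setminus\{r(P)\}$; (iii) if $e(k)=1$ then $e(c_L(k))=0$. Mesh patterns: $(\tau,C)$ with $\tau\in S_k$, $C\subseteq\{0,\dots,k\}^2$; $\pi\in S_n$ contains it if there are indices $\nu_1<\dots<\nu_k$ with $\pi(\nu_1),\dots,\pi(\nu_k)$ order-isomorphic to $\tau$ and, with $\lambda_1<\dots<\lambda_k$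 these values sorted and $\nu_0=\lambda_0=0$, $\nu_{k+1}=\lambda_{k+1}=n+1$, no point $(j,\pi(j))$ lies in $(\nu_a,\nu_{a+1})\times(\lambda_b,\lambda_{b+1})$ for $(a,b)\in C$. Classical patterns are the case $C=\emptyset$. $S_n(\sigma_1,\sigma_2)$ is the set of permutations of $[n]$ avoiding both. $\sigma(P,e)$: with $\rho=\tau(P)^{-1}$, $C_j=\{(\rho(j)-1,m):m\in B_R^-(j)\}$ for $j\in[k]$; for non-root $j$, $C_j'=\emptyset$ if $e(j)=0$ and $C_j'=\{(\rho(j)-1,\min P(j)-1),(\rho(j)-1,\max P(j))\}$ if $e(j)=1$; $\sigma(P,e)=(\tau(P),\bigcup_jC_j\cup\bigcup_jC_j')$. *)

theory Defs
  imports "HOL-Library.Tree" "HOL-Combinatorics.Multiset_Permutations"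
begin

definition trees_k :: "nat \<Rightarrow> nat tree set" where
  "trees_k k = {P. inorder P = [1..<Suc k]}"

fun rootv :: "nat tree \<Rightarrow> nat option" where
  "rootv Leaf = None"
| "rootv (Node l x r) = Some x"

text \<open>Subtree P(i) rooted at vertex i (Leaf if i is not a vertex).\<close>
fun subtree_at :: "nat tree \<Rightarrow> nat \<Rightarrow> nat tree" where
  "subtree_at Leaf i = Leaf"
| "subtree_at (Node l x r) i =
     (if x = i then Node l x r
      else if i \<in> set_tree l then subtree_at l i else subtree_at r i)"

text \<open>Left / right child (None stands for epsilon).\<close>
definition cL :: "nat tree \<Rightarrow> nat \<Rightarrow> nat option" where
  "cL P i = (case subtree_at P i of Leaf \<Rightarrow> None | Node l _ _ \<Rightarrow> rootv l)"

definition cR :: "nat tree \<Rightarrow> nat \<Rightarrow> nat option" where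
  "cR P i = (case subtree_at P i of Leaf \<Rightarrow> None | Node _ _ r \<Rightarrow> rootv r)"

fun parent :: "nat tree \<Rightarrow> nat \<Rightarrow> nat option" where
  "parent Leaf i = None"
| "parent (Node l x r) i =
     (if rootv l = Some i \<or> rootv r = Some i then Some x
      else if i \<in> set_tree l then parent l i else parent r i)"

fun rspine :: "nat tree \<Rightarrow> nat list" where
  "rspine Leaf = []"
| "rspine (Node l x r) = x # rspine r"

definition BR :: "nat tree \<Rightarrow> nat \<Rightarrow> nat set" where
  "BR P i = set (rspine (subtree_at P i))"

definition BRm :: "nat tree \<Rightarrow> nat \<Rightarrow> nat set" where
  "BRm P i = set (butlast (rspine (subtree_at P i)))"

definition Pv :: "nat tree \<Rightarrow> nat \<Rightarrow> nat set" where
  "Pv P i = set_tree (subtree_at P i)"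

text \<open>A tree pattern is (P,e) with e : [k]\<setminus>{r(P)} \<rightarrow> {0,1}; we model e as a
  function nat \<Rightarrow> bool (True = 1, False = 0); its values off [k]\<setminus>{r(P)} are irrelevant.\<close>
definition friendly :: "nat \<Rightarrow> nat tree \<Rightarrow> (nat \<Rightarrow> bool) \<Rightarrow> bool" where
  "friendly k P e \<longleftrightarrow>
     parent P k \<noteq> None \<and> cL P k \<noteq> None
   \<and> (\<forall>j \<in> BRm P (the (rootv P)) - {the (rootv P)}. \<not> e j)
   \<and> (e k \<longrightarrow> \<not> e (the (cL P k)))"

text \<open>A permutation in S_m is a list of length m containing each of 1..m exactly once;
  its value at (1-based) position a is xs ! (a - 1).\<close>
definition perms :: "nat \<Rightarrow> nat list set" where
  "perms m = permutations_of_set {1..m}"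

type_synonym mesh = "nat list \<times> (nat \<times> nat) set"

definition contains :: "nat list \<Rightarrow> mesh \<Rightarrow> bool" where
  "contains \<pi> p \<longleftrightarrow>
    (let \<tau> = fst p; C = snd p; k = length \<tau>; n = length \<pi>;
         pv = (\<lambda>j. \<pi> ! (j - 1)); tv = (\<lambda>a. \<tau> ! (a - 1)) in
     \<exists>\<nu> :: nat \<Rightarrow> nat.
       (\<forall>a \<in> {1..k}. 1 \<le> \<nu> a \<and> \<nu> a \<le> n)
     \<and> (\<forall>a \<in> {1..k}. \<forall>b \<in> {1..k}. a < b \<longrightarrow> \<nu> a < \<nu> b)
     \<and> (\<forall>a \<in> {1..k}. \<forall>b \<in> {1..k}. pv (\<nu> a) < pv (\<nu> b) \<longleftrightarrow> tv a < tv b)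
     \<and> (let \<nu>' = (\<lambda>a. if a = 0 then 0 else if a = k + 1 then n + 1 else \<nu> a);
            vals = sorted_list_of_set {pv (\<nu> a) | a. a \<in> {1..k}};
            lam = (\<lambda>b. if b = 0 then 0 else if b = k + 1 then n + 1 else vals ! (b - 1)) in
        \<forall>(a, b) \<in> C. \<not> (\<exists>j \<in> {1..n}. \<nu>' a < j \<and> j < \<nu>' (a + 1)
                                    \<and> lam b < pv j \<and> pv j < lam (b + 1))))"

definition avoiders :: "nat \<Rightarrow> mesh \<Rightarrow> mesh \<Rightarrow> nat list set" where
  "avoiders n s1 s2 = {\<pi> \<in> perms n. \<not> contains \<pi> s1 \<and> \<not> contains \<pi> s2}"

definition p231 :: mesh where
  "p231 = ([2, 3, 1], {})"

text \<open>rho(j) - 1: the 0-based position of j in the list xs.\<close>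
definition idx :: "nat list \<Rightarrow> nat \<Rightarrow> nat" where
  "idx xs j = (LEAST a. a < length xs \<and> xs ! a = j)"

definition sigma :: "nat \<Rightarrow> nat tree \<Rightarrow> (nat \<Rightarrow> bool) \<Rightarrow> mesh" where
  "sigma k P e =
    (let \<tau> = preorder P in
     (\<tau>, (\<Union>j \<in> {1..k}. {(idx \<tau> j, m) | m. m \<in> BRm P j})
        \<union> (\<Union>j \<in> {1..k} - {the (rootv P)}.
              if e j then {(idx \<tau> j, Min (Pv P j) - 1), (idx \<tau> j, Max (Pv P j))} else {})))"

definition sigma_minus :: "nat \<Rightarrow> nat tree \<Rightarrow> (nat \<Rightarrow> bool) \<Rightarrow> mesh" where
  "sigma_minus k P e = (fst (sigma k P e), snd (sigma k P e) - {(idx (preorder P) k, k)})"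

end

theory Submission
  imports Defs
begin

text \<open>Let \<pi> avoid 231 and contain \<sigma>^-(P,e), and let i be the position of k in \<tau>(P).
  If the box (i-1, k) of the occurrence contains points, move the occurrence of k onto the leftmost
  of them; by minimality the box becomes empty. The only boxes that grow are those in column i and
  those in row k-1. The entry right of k in \<tau>(P) is c = c_L(k), and e(c) = 0 when e(k) = 1, so
  the boxes of column i come from B_R^-(c) and lie in rows c, ..., k-2, while the boxes of row k-1
  lie right of column i. A point entering the grown part of any of them would complete a 231 with
  the old occurrence of k. When e(k) = 0 the box (i-1, k) is not in \<sigma>(P,e) at all.\<close>

section \<open>Occurrences of mesh patterns\<close>

text \<open>For an occurrence \<nu>, nu_ext and lam_ext are the paper's \<nu>_0, ..., \<nu>_(k+1) and
  \<lambda>_0, ..., \<lambda>_(k+1); the box (a, b) is the open rectangle between \<nu>_a, \<nu>_(a+1) and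
  \<lambda>_b, \<lambda>_(b+1).\<close>

definition nu_ext :: "nat \<Rightarrow> nat \<Rightarrow> (nat \<Rightarrow> nat) \<Rightarrow> nat \<Rightarrow> nat" where
  "nu_ext n k \<nu> a = (if a = 0 then 0 else if a = k + 1 then n + 1 else \<nu> a)"

definition lam_ext :: "nat list \<Rightarrow> nat \<Rightarrow> (nat \<Rightarrow> nat) \<Rightarrow> nat \<Rightarrow> nat" where
  "lam_ext \<pi> k \<nu> b = (if b = 0 then 0 else if b = k + 1 then length \<pi> + 1
     else sorted_list_of_set {\<pi> ! (\<nu> a - 1) | a. a \<in> {1..k}} ! (b - 1))"

definition occurrence :: "nat list \<Rightarrow> nat list \<Rightarrow> (nat \<Rightarrow> nat) \<Rightarrow> bool" where
  "occurrence \<pi> \<tau> \<nu> \<longleftrightarrow>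
       (\<forall>a \<in> {1..length \<tau>}. 1 \<le> \<nu> a \<and> \<nu> a \<le> length \<pi>)
     \<and> (\<forall>a \<in> {1..length \<tau>}. \<forall>b \<in> {1..length \<tau>}. a < b \<longrightarrow> \<nu> a < \<nu> b)
     \<and> (\<forall>a \<in> {1..length \<tau>}. \<forall>b \<in> {1..length \<tau>}.
          \<pi> ! (\<nu> a - 1) < \<pi> ! (\<nu> b - 1) \<longleftrightarrow> \<tau> ! (a - 1) < \<tau> ! (b - 1))"

definition box_empty :: "nat list \<Rightarrow> nat \<Rightarrow> (nat \<Rightarrow> nat) \<Rightarrow> nat \<Rightarrow> nat \<Rightarrow> bool" where
  "box_empty \<pi> k \<nu> a b \<longleftrightarrow> \<not> (\<exists>j \<in> {1..length \<pi>}.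
      nu_ext (length \<pi>) k \<nu> a < j \<and> j < nu_ext (length \<pi>) k \<nu> (a + 1)
    \<and> lam_ext \<pi> k \<nu> b < \<pi> ! (j - 1) \<and> \<pi> ! (j - 1) < lam_ext \<pi> k \<nu> (b + 1))"

lemma contains_iff_occurrence:
  "contains \<pi> (\<tau>, C) \<longleftrightarrow>
     (\<exists>\<nu>. occurrence \<pi> \<tau> \<nu> \<and> (\<forall>(a, b) \<in> C. box_empty \<pi> (length \<tau>) \<nu> a b))"
  unfolding contains_def occurrence_def box_empty_def nu_ext_def lam_ext_def Let_def by auto

lemma contains_antimono: "C \<subseteq> C' \<Longrightarrow> contains \<pi> (\<tau>, C') \<Longrightarrow> contains \<pi> (\<tau>, C)"
  unfolding contains_iff_occurrence by blast

lemma contains_231I: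
  assumes "1 \<le> p" "p < q" "q < r" "r \<le> length \<pi>"
    and "\<pi> ! (r - 1) < \<pi> ! (p - 1)" "\<pi> ! (p - 1) < \<pi> ! (q - 1)"
  shows "contains \<pi> p231"
proof -
  have "occurrence \<pi> [2, 3, 1] (\<lambda>a. if a = 1 then p else if a = 2 then q else r)"
    using assms by (auto simp: occurrence_def atLeastAtMost_iff le_Suc_eq numeral_eq_Suc)
  then show ?thesis
    unfolding p231_def contains_iff_occurrence by auto
qed

lemma box_empty_mono:
  assumes "box_empty \<pi> k \<nu> a b"
    and "nu_ext (length \<pi>) k \<nu> a \<le> nu_ext (length \<pi>) k \<mu> a"
    and "nu_ext (length \<pi>) k \<mu> (a + 1) \<le> nu_ext (length \<pi>) k \<nu> (a + 1)"
    and "lam_ext \<pi> k \<nu> b \<le> lam_ext \<pi> k \<mu> b"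
    and "lam_ext \<pi> k \<mu> (b + 1) \<le> lam_ext \<pi> k \<nu> (b + 1)"
  shows "box_empty \<pi> k \<mu> a b"
  using assms unfolding box_empty_def by (meson le_less_trans less_le_trans)

lemma perms_iff: "xs \<in> perms n \<longleftrightarrow> distinct xs \<and> set xs = {1..n}"
  unfolding perms_def permutations_of_set_def by auto

lemma perms_length: "xs \<in> perms n \<Longrightarrow> length xs = n"
  unfolding perms_iff using distinct_card by fastforce

lemma idx_in:
  assumes "x \<in> set xs"
  shows "idx xs x < length xs \<and> xs ! idx xs x = x"
proof -
  from assms obtain a where "a < length xs \<and> xs ! a = x"
    by (auto simp: in_set_conv_nth)
  then show ?thesis
    unfolding idx_def by (rule LeastI)
qed

lemma idx_nth: "distinct xs \<Longrightarrow> a < length xs \<Longrightarrow> idx xs (xs ! a) = a"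
  using idx_in[of "xs ! a" xs] nth_eq_iff_index_eq by auto

lemma idx_append_nth:
  "distinct (xs @ zs @ ys) \<Longrightarrow> q < length zs \<Longrightarrow> idx (xs @ zs @ ys) (zs ! q) = length xs + q"
  using idx_nth[of "xs @ zs @ ys" "length xs + q"] by (simp add: nth_append)

lemma lam_ext_occurrence:
  assumes occ: "occurrence \<pi> \<tau> \<nu>" and \<tau>: "\<tau> \<in> perms k" and b: "b \<in> {1..k}"
  shows "lam_ext \<pi> k \<nu> b = \<pi> ! (\<nu> (Suc (idx \<tau> b)) - 1)"
proof -
  define g where "g c = \<pi> ! (\<nu> (Suc (idx \<tau> c)) - 1)" for c
  have len: "length \<tau> = k" and dist: "distinct \<tau>" and set\<tau>: "set \<tau> = {1..k}"
    using \<tau> perms_length perms_iff by auto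
  have pos: "Suc (idx \<tau> c) \<in> {1..k} \<and> \<tau> ! idx \<tau> c = c" if "c \<in> {1..k}" for c
    using idx_in[of c \<tau>] that len set\<tau> by auto
  have g_less: "g c < g d" if "c \<in> {1..k}" "d \<in> {1..k}" "c < d" for c d
    using occ pos[OF that(1)] pos[OF that(2)] that(3) len unfolding occurrence_def g_def by auto
  have "{\<pi> ! (\<nu> a - 1) | a. a \<in> {1..k}} = g ` {1..k}"
  proof (intro set_eqI iffI)
    fix y assume "y \<in> {\<pi> ! (\<nu> a - 1) | a. a \<in> {1..k}}"
    then obtain a where a: "a \<in> {1..k}" "y = \<pi> ! (\<nu> a - 1)" by auto
    then have "\<tau> ! (a - 1) \<in> {1..k}" "Suc (idx \<tau> (\<tau> ! (a - 1))) = a"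
      using nth_mem[of "a - 1" \<tau>] idx_nth[OF dist, of "a - 1"] len set\<tau> by auto
    then show "y \<in> g ` {1..k}" using a unfolding g_def by force
  qed (use pos g_def in fastforce)
  also have "\<dots> = set (map g [1..<Suc k])" by auto
  finally have "sorted_list_of_set {\<pi> ! (\<nu> a - 1) | a. a \<in> {1..k}} = map g [1..<Suc k]"
  proof (intro strict_sorted_equal)
    show "sorted_wrt (<) (map g [1..<Suc k])"
      unfolding sorted_wrt_map by (rule sorted_wrt_mono_rel[OF _ sorted_wrt_upt]) (use g_less in auto)
  qed auto
  moreover have "map g [1..<Suc k] ! (b - 1) = g b"
    using b by (auto simp del: upt_Suc)
  ultimately show ?thesis
    using b unfolding lam_ext_def g_def by simp
qed

text \<open>Below, p is the 0-based position of k in \<tau>, i.e. the paper's i - 1, so k sits at the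
  1-based position Suc p of an occurrence and the box to be added is (p, k).\<close>

context
  fixes \<pi> \<tau> :: "nat list" and \<nu> :: "nat \<Rightarrow> nat" and n k p :: nat
  assumes \<pi>: "\<pi> \<in> perms n" and \<tau>: "\<tau> \<in> perms k" and occ: "occurrence \<pi> \<tau> \<nu>"
    and max_pos: "p < k" "\<tau> ! p = k"
begin

abbreviation (input) val :: "nat \<Rightarrow> nat" where
  "val j \<equiv> \<pi> ! (j - 1)"

private lemma len: "length \<pi> = n" "length \<tau> = k"
  using \<pi> \<tau> by (simp_all add: perms_length)

private lemma nu_bounds: "a \<in> {1..k} \<Longrightarrow> 1 \<le> \<nu> a \<and> \<nu> a \<le> n"
  using occ len unfolding occurrence_def by auto

private lemma nu_less: "a \<in> {1..k} \<Longrightarrow> b \<in> {1..k} \<Longrightarrow> a < b \<Longrightarrow> \<nu> a < \<nu> b"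
  using occ len unfolding occurrence_def by auto

private lemma val_nu_less_iff:
  "a \<in> {1..k} \<Longrightarrow> b \<in> {1..k} \<Longrightarrow> val (\<nu> a) < val (\<nu> b) \<longleftrightarrow> \<tau> ! (a - 1) < \<tau> ! (b - 1)"
  using occ len unfolding occurrence_def by auto

private lemma val_inj:
  assumes "j \<in> {1..n}" "j' \<in> {1..n}" "val j = val j'"
  shows "j = j'"
proof -
  have "j - 1 = j' - 1"
    using assms \<pi> len nth_eq_iff_index_eq[of \<pi> "j - 1" "j' - 1"] unfolding perms_iff by force
  then show ?thesis using assms by auto
qed

private lemma max_pos_in: "Suc p \<in> {1..k}"
  using max_pos by auto

private lemma val_below_max:
  assumes a: "a \<in> {1..k}" "a \<noteq> Suc p"
  shows "val (\<nu> a) < val (\<nu> (Suc p))"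
proof -
  have "a - 1 < k" "a - 1 \<noteq> p"
    using a by auto
  then have "\<tau> ! (a - 1) \<in> {1..k}" "\<tau> ! (a - 1) \<noteq> \<tau> ! p"
    using \<tau> max_pos len nth_mem[of "a - 1" \<tau>] nth_eq_iff_index_eq[of \<tau> "a - 1" p]
    unfolding perms_iff by auto
  then show ?thesis
    using val_nu_less_iff[OF a(1) max_pos_in] max_pos by auto
qed

private lemma lam_ext_val: "b \<in> {1..k} \<Longrightarrow> lam_ext \<pi> k \<nu> b = val (\<nu> (Suc (idx \<tau> b)))"
  using lam_ext_occurrence[OF occ \<tau>] by simp

private lemma idx_max: "idx \<tau> k = p"
  using idx_nth[of \<tau> p] \<tau> max_pos len unfolding perms_iff by auto

private lemma lam_ext_max: "lam_ext \<pi> k \<nu> k = val (\<nu> (Suc p))"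
  using lam_ext_val[of k] max_pos idx_max by auto

private lemma lam_ext_less:
  assumes "b \<in> {1..k}" "b' \<in> {1..k}" "b < b'"
  shows "lam_ext \<pi> k \<nu> b < lam_ext \<pi> k \<nu> b'"
proof -
  have "Suc (idx \<tau> c) \<in> {1..k} \<and> \<tau> ! (Suc (idx \<tau> c) - 1) = c" if "c \<in> {1..k}" for c
    using idx_in[of c \<tau>] that \<tau> len unfolding perms_iff by auto
  then show ?thesis
    using assms lam_ext_val val_nu_less_iff by metis
qed

private lemma lam_ext_at_nth:
  assumes "a \<in> {1..k}"
  shows "lam_ext \<pi> k \<nu> (\<tau> ! (a - 1)) = val (\<nu> a)"
proof -
  have "\<tau> ! (a - 1) \<in> {1..k}" "idx \<tau> (\<tau> ! (a - 1)) = a - 1"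
    using assms \<tau> len nth_mem[of "a - 1" \<tau>] idx_nth[of \<tau> "a - 1"] unfolding perms_iff by auto
  then show ?thesis
    using lam_ext_val assms by auto
qed

context
  fixes x :: nat
  assumes x: "nu_ext n k \<nu> p < x" "x < \<nu> (Suc p)" "val (\<nu> (Suc p)) < val x"
begin

private lemma x_bounds: "x \<in> {1..n}"
  using x nu_bounds[OF max_pos_in] by auto

lemma occurrence_shift_max: "occurrence \<pi> \<tau> (\<nu>(Suc p := x))"
proof -
  have "\<nu> a < x" if "a \<in> {1..k}" "a < Suc p" for a
  proof -
    have "\<nu> a \<le> \<nu> p" "nu_ext n k \<nu> p = \<nu> p"
      using that nu_less[of a p] max_pos unfolding nu_ext_def by (cases "a = p", auto)
    then show ?thesis using x by auto
  qed
  moreover have "x < \<nu> b" if "b \<in> {1..k}" "Suc p < b" for b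
    using that x nu_less[OF max_pos_in] by fastforce
  moreover have "val x < val (\<nu> a) \<longleftrightarrow> \<tau> ! p < \<tau> ! (a - 1)"
    and "val (\<nu> a) < val x \<longleftrightarrow> \<tau> ! (a - 1) < \<tau> ! p"
    if "a \<in> {1..k}" "a \<noteq> Suc p" for a
    using that x val_below_max[OF that] val_nu_less_iff[OF that(1) max_pos_in] by auto
  ultimately show ?thesis
    using occ x_bounds nu_less len unfolding occurrence_def
    by (auto simp: linorder_neq_iff)
qed

lemma nu_ext_shift_max:
  "nu_ext n k (\<nu>(Suc p := x)) a = (if a = Suc p then x else nu_ext n k \<nu> a)"
  using max_pos unfolding nu_ext_def by auto

lemma lam_ext_shift_max:
  assumes "b \<le> k + 1"
  shows "lam_ext \<pi> k (\<nu>(Suc p := x)) b = (if b = k then val x else lam_ext \<pi> k \<nu> b)"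
proof (cases "b \<in> {1..k}")
  case True
  have "Suc (idx \<tau> b) = Suc p \<longleftrightarrow> b = k"
    using idx_in[of b \<tau>] \<tau> True max_pos idx_max unfolding perms_iff by auto
  then show ?thesis
    using lam_ext_occurrence[OF occurrence_shift_max \<tau> True] lam_ext_val[OF True] by auto
next
  case False
  then show ?thesis
    using assms max_pos unfolding lam_ext_def by auto
qed

private lemma lam_ext_le_shift_max:
  "b \<le> k + 1 \<Longrightarrow> lam_ext \<pi> k \<nu> b \<le> lam_ext \<pi> k (\<nu>(Suc p := x)) b"
  using lam_ext_shift_max lam_ext_max x by auto

text \<open>Boxes in the column right of the maximum stay empty because a point in the widened part of
  the column would be the \<open>2\<close> of a \<open>231\<close> whose \<open>3\<close> and \<open>1\<close> are the old maximum and its right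
  neighbour.\<close>

private lemma box_empty_shift_max_right:
  assumes no231: "\<not> contains \<pi> p231"
    and b: "\<tau> ! Suc p \<le> b" "b + 2 \<le> k" and a: "Suc p < k"
    and box: "box_empty \<pi> k \<nu> (Suc p) b"
  shows "box_empty \<pi> k (\<nu>(Suc p := x)) (Suc p) b"
  unfolding box_empty_def
proof
  let ?r = "Suc (Suc p)"
  have r: "?r \<in> {1..k}" using a by auto
  assume "\<exists>j\<in>{1..length \<pi>}. nu_ext (length \<pi>) k (\<nu>(Suc p := x)) (Suc p) < j
    \<and> j < nu_ext (length \<pi>) k (\<nu>(Suc p := x)) (Suc p + 1)
    \<and> lam_ext \<pi> k (\<nu>(Suc p := x)) b < val j \<and> val j < lam_ext \<pi> k (\<nu>(Suc p := x)) (b + 1)"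
  then obtain j where j: "j \<in> {1..n}" "x < j" "j < \<nu> ?r"
    and val_j: "lam_ext \<pi> k \<nu> b < val j" "val j < lam_ext \<pi> k \<nu> (b + 1)"
    using nu_ext_shift_max lam_ext_shift_max b a len unfolding nu_ext_def by auto
  have "\<tau> ! Suc p \<ge> 1"
    using \<tau> len a nth_mem[of "Suc p" \<tau>] unfolding perms_iff by fastforce
  then have "val (\<nu> ?r) \<le> lam_ext \<pi> k \<nu> b"
    using lam_ext_at_nth[OF r] lam_ext_less[of "\<tau> ! Suc p" b] b by (cases "\<tau> ! Suc p = b") auto
  moreover have "lam_ext \<pi> k \<nu> (b + 1) < val (\<nu> (Suc p))"
    using lam_ext_less[of "b + 1" k] lam_ext_max b by auto
  ultimately consider "\<nu> (Suc p) < j" | "j = \<nu> (Suc p)"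
    | "j < \<nu> (Suc p)" "val (\<nu> ?r) < val j" "val j < val (\<nu> (Suc p))"
    using val_j by fastforce
  then show False
  proof cases
    case 1
    then show False
      using box j val_j max_pos len unfolding box_empty_def nu_ext_def by auto
  next
    case 2
    then show False
      using val_j \<open>lam_ext \<pi> k \<nu> (b + 1) < val (\<nu> (Suc p))\<close> by auto
  next
    case 3
    then have "contains \<pi> p231"
      using contains_231I[of j "\<nu> (Suc p)" "\<nu> ?r"] j nu_less[OF max_pos_in r] nu_bounds[OF r] len
      by auto
    then show False using no231 by contradiction
  qed
qed

text \<open>Likewise, a point that enters a box \<open>(a, k - 1)\<close> with \<open>a\<close> right of the maximum would be the
  \<open>3\<close> of a \<open>231\<close> formed with the old maximum and the entry right of the box.\<close>

private lemma box_empty_shift_max_top: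
  assumes no231: "\<not> contains \<pi> p231"
    and a: "Suc p < a" "a < k"
    and box: "box_empty \<pi> k \<nu> a (k - 1)"
  shows "box_empty \<pi> k (\<nu>(Suc p := x)) a (k - 1)"
  unfolding box_empty_def
proof
  have a_in: "a \<in> {1..k}" "a + 1 \<in> {1..k}" using a by auto
  assume "\<exists>j\<in>{1..length \<pi>}. nu_ext (length \<pi>) k (\<nu>(Suc p := x)) a < j
    \<and> j < nu_ext (length \<pi>) k (\<nu>(Suc p := x)) (a + 1)
    \<and> lam_ext \<pi> k (\<nu>(Suc p := x)) (k - 1) < val j \<and> val j < lam_ext \<pi> k (\<nu>(Suc p := x)) (k - 1 + 1)"
  moreover have "k - 1 \<noteq> k" "k - 1 + 1 = k"
    using a by auto
  ultimately obtain j where j: "j \<in> {1..n}" "\<nu> a < j" "j < \<nu> (a + 1)"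
    and val_j: "lam_ext \<pi> k \<nu> (k - 1) < val j"
    using nu_ext_shift_max lam_ext_shift_max[of "k - 1"] a len unfolding nu_ext_def by auto
  have far: "\<nu> (Suc p) < \<nu> a"
    using nu_less[OF max_pos_in a_in(1)] a by auto
  consider "val j < val (\<nu> (Suc p))" | "val j = val (\<nu> (Suc p))" | "val (\<nu> (Suc p)) < val j"
    by linarith
  then show False
  proof cases
    case 1
    then show False
      using box j val_j a lam_ext_max len unfolding box_empty_def nu_ext_def by auto
  next
    case 2
    then show False
      using val_inj[OF j(1) _ 2] nu_bounds[OF max_pos_in] far j(2) by auto
  next
    case 3
    have "val (\<nu> (a + 1)) < val (\<nu> (Suc p))"
      using val_below_max[OF a_in(2)] a by auto
    then have "contains \<pi> p231"
      using contains_231I[of "\<nu> (Suc p)" j "\<nu> (a + 1)"] 3 j far nu_bounds[OF max_pos_in]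
        nu_bounds[OF a_in(2)] len
      by auto
    then show False using no231 by contradiction
  qed
qed

lemma box_empty_shift_max:
  assumes no231: "\<not> contains \<pi> p231"
    and ab: "a < k" "b \<le> k" "b = k - 1 \<Longrightarrow> p < a"
      "a = Suc p \<Longrightarrow> \<tau> ! Suc p \<le> b \<and> b + 2 \<le> k"
    and box: "box_empty \<pi> k \<nu> a b"
  shows "box_empty \<pi> k (\<nu>(Suc p := x)) a b"
proof -
  consider "a = Suc p" | "Suc p < a" "b = k - 1" | "a \<noteq> Suc p" "b \<noteq> k - 1"
    using ab(3) by linarith
  then show ?thesis
  proof cases
    case 1
    then show ?thesis
      using box_empty_shift_max_right[OF no231] ab box by auto
  next
    case 2
    then show ?thesis
      using box_empty_shift_max_top[OF no231] ab box by auto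
  next
    case 3
    have "nu_ext n k (\<nu>(Suc p := x)) (a + 1) \<le> nu_ext n k \<nu> (a + 1)"
      using x nu_ext_shift_max max_pos unfolding nu_ext_def by auto
    moreover have "lam_ext \<pi> k (\<nu>(Suc p := x)) (b + 1) = lam_ext \<pi> k \<nu> (b + 1)"
      using lam_ext_shift_max[of "b + 1"] ab(2) 3 max_pos by auto
    ultimately show ?thesis
      using box_empty_mono[OF box] nu_ext_shift_max lam_ext_le_shift_max[of b] 3 ab(2) len
      by auto
  qed
qed

end

lemma contains_insert_max_box_of_occurrence:
  assumes no231: "\<not> contains \<pi> p231"
    and C: "\<And>a b. (a, b) \<in> C \<Longrightarrow> a < k \<and> b \<le> k"
      "\<And>a. (a, k - 1) \<in> C \<Longrightarrow> p < a"
      "\<And>b. (Suc p, b) \<in> C \<Longrightarrow> \<tau> ! Suc p \<le> b \<and> b + 2 \<le> k"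
    and boxes: "\<forall>(a, b) \<in> C. box_empty \<pi> k \<nu> a b"
  shows "contains \<pi> (\<tau>, insert (p, k) C)"
proof -
  define X where "X = {j \<in> {1..n}. nu_ext n k \<nu> p < j \<and> j < \<nu> (Suc p) \<and> val (\<nu> (Suc p)) < val j}"
  have box_iff: "box_empty \<pi> k \<mu> p k \<longleftrightarrow> \<not> (\<exists>j \<in> {1..n}. nu_ext n k \<mu> p < j
    \<and> j < \<mu> (Suc p) \<and> lam_ext \<pi> k \<mu> k < val j)" for \<mu>
  proof -
    have "lam_ext \<pi> k \<mu> (k + 1) = n + 1" "nu_ext n k \<mu> (p + 1) = \<mu> (Suc p)"
      using max_pos len unfolding lam_ext_def nu_ext_def by auto
    moreover have "val j \<le> n" if "j \<in> {1..n}" for j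
      using \<pi> that len nth_mem[of "j - 1" \<pi>] unfolding perms_iff by fastforce
    ultimately show ?thesis
      using len unfolding box_empty_def by (auto simp: less_Suc_eq_le)
  qed
  show ?thesis
  proof (cases "X = {}")
    case True
    then have "box_empty \<pi> k \<nu> p k"
      unfolding box_iff X_def lam_ext_max by auto
    then show ?thesis
      unfolding contains_iff_occurrence using occ boxes len by auto
  next
    case False
    define x where "x = Min X"
    have "x \<in> X" and x_min: "\<And>j. j \<in> X \<Longrightarrow> x \<le> j"
      using Min_in[of X] False x_def unfolding X_def by auto
    then have x: "nu_ext n k \<nu> p < x" "x < \<nu> (Suc p)" "val (\<nu> (Suc p)) < val x"
      unfolding X_def by auto
    have "lam_ext \<pi> k (\<nu>(Suc p := x)) k = val x" "nu_ext n k (\<nu>(Suc p := x)) p = nu_ext n k \<nu> p"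
      using lam_ext_shift_max[OF x, of k] nu_ext_shift_max[OF x, of p] by auto
    then have "box_empty \<pi> k (\<nu>(Suc p := x)) p k"
      unfolding box_iff using x x_min unfolding X_def by fastforce
    moreover have "box_empty \<pi> k (\<nu>(Suc p := x)) a b" if "(a, b) \<in> C" for a b
    proof (rule box_empty_shift_max[OF x no231])
      show "a < k" "b \<le> k" using C(1)[OF that] by auto
      show "p < a" if "b = k - 1" using C(2) \<open>(a, b) \<in> C\<close> that by blast
      show "\<tau> ! Suc p \<le> b \<and> b + 2 \<le> k" if "a = Suc p" using C(3) \<open>(a, b) \<in> C\<close> that by blast
      show "box_empty \<pi> k \<nu> a b" using boxes that by blast
    qed
    ultimately show ?thesis
      unfolding contains_iff_occurrence using occurrence_shift_max[OF x] len by auto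
  qed
qed

end

lemma contains_insert_max_box:
  assumes "\<pi> \<in> perms n" "\<tau> \<in> perms k" "p < k" "\<tau> ! p = k" "\<not> contains \<pi> p231"
    and "\<And>a b. (a, b) \<in> C \<Longrightarrow> a < k \<and> b \<le> k"
      "\<And>a. (a, k - 1) \<in> C \<Longrightarrow> p < a"
      "\<And>b. (Suc p, b) \<in> C \<Longrightarrow> \<tau> ! Suc p \<le> b \<and> b + 2 \<le> k"
    and "contains \<pi> (\<tau>, C)"
  shows "contains \<pi> (\<tau>, insert (p, k) C)"
proof -
  obtain \<nu> where "occurrence \<pi> \<tau> \<nu>" "\<forall>(a, b) \<in> C. box_empty \<pi> k \<nu> a b"
    using assms(2,9) perms_length unfolding contains_iff_occurrence by blast
  then show ?thesis
    using contains_insert_max_box_of_occurrence assms(1-8) by blast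
qed

section \<open>Binary search trees\<close>

lemma subtrees_trans: "u \<in> subtrees t \<Longrightarrow> v \<in> subtrees u \<Longrightarrow> v \<in> subtrees t"
  by (induction t) auto

lemma set_tree_subtrees: "u \<in> subtrees t \<Longrightarrow> set_tree u \<subseteq> set_tree t"
  by (induction t) auto

lemma bst_subtrees: "bst t \<Longrightarrow> u \<in> subtrees t \<Longrightarrow> bst u"
  by (induction t) auto

lemma subtree_at_eq: "bst t \<Longrightarrow> Node l x r \<in> subtrees t \<Longrightarrow> subtree_at t x = Node l x r"
  by (induction t) (fastforce dest: in_set_tree_if)+

lemma subtree_at_subtrees:
  "bst t \<Longrightarrow> j \<in> set_tree t \<Longrightarrow> \<exists>l r. subtree_at t j = Node l j r \<and> Node l j r \<in> subtrees t"
  by (metis set_treeE subtree_at_eq)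

lemma subtree_at_notin: "j \<notin> set_tree t \<Longrightarrow> subtree_at t j = Leaf"
  by (induction t) auto

lemma set_rspine: "set (rspine t) \<subseteq> set_tree t"
  by (induction t) auto

lemma butlast_rspine_right_child:
  "m \<in> set (butlast (rspine t)) \<Longrightarrow> \<exists>l r. Node l m r \<in> subtrees t \<and> r \<noteq> Leaf"
proof (induction t)
  case (Node l x r)
  then show ?case
    by (cases r) (auto split: if_splits)
qed simp

lemma preorder_subtrees: "u \<in> subtrees t \<Longrightarrow> \<exists>xs ys. preorder t = xs @ preorder u @ ys"
proof (induction t)
  case (Node l x r)
  then show ?case
    by (auto, metis append.left_neutral append_Nil2) (metis append_Cons append_assoc)+
qed simp

lemma inorder_subtrees: "u \<in> subtrees t \<Longrightarrow> \<exists>xs ys. inorder t = xs @ inorder u @ ys"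
proof (induction t)
  case (Node l x r)
  then show ?case
    by (auto, metis append.left_neutral append_Nil2) (metis append_Cons append_assoc)+
qed simp

lemma subtrees_nested:
  "bst t \<Longrightarrow> u \<in> subtrees t \<Longrightarrow> v \<in> subtrees t \<Longrightarrow> set_tree u \<inter> set_tree v \<noteq> {}
   \<Longrightarrow> u \<in> subtrees v \<or> v \<in> subtrees u"
proof (induction t)
  case (Node l x r)
  consider "u = Node l x r \<or> v = Node l x r"
    | "u \<in> subtrees l \<union> subtrees r" "v \<in> subtrees l \<union> subtrees r"
    using Node.prems by auto
  then show ?case
  proof cases
    case 1
    then show ?thesis using Node.prems by auto
  next
    case 2
    have "set_tree l \<inter> set_tree r = {}"
      using Node.prems(1) by fastforce
    then have "u \<in> subtrees l \<and> v \<in> subtrees l \<or> u \<in> subtrees r \<and> v \<in> subtrees r"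
      using 2 Node.prems(4) set_tree_subtrees[of u] set_tree_subtrees[of v] by blast
    then show ?thesis
      using Node.IH Node.prems(1,4) by auto
  qed
qed simp

lemma set_tree_subtrees_interval:
  assumes "inorder t = [a..<b]" "u \<in> subtrees t"
  shows "\<exists>lo hi. set_tree u = {lo..<hi}"
proof (cases "u = Leaf")
  case False
  obtain xs ys where t: "inorder t = xs @ inorder u @ ys"
    using inorder_subtrees assms(2) by blast
  have "size u > 0"
    using False by (cases u) auto
  then have "a + length xs + size u \<le> b"
    using arg_cong[OF t, of length] assms(1) by simp
  moreover have "inorder u = take (size u) (drop (length xs) [a..<b])"
    using t assms(1) by (metis append_eq_conv_conj length_inorder)
  ultimately have "inorder u = [a + length xs..<a + length xs + size u]"
    by (simp add: take_upt)
  then show ?thesis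
    by (metis set_inorder set_upt)
qed auto

lemma idx_preorder_descendant:
  assumes "distinct (preorder t)" "Node l x r \<in> subtrees t" "y \<in> set_tree l \<union> set_tree r"
  shows "idx (preorder t) x < idx (preorder t) y"
proof -
  obtain xs ys where t: "preorder t = xs @ (x # preorder l @ preorder r) @ ys"
    using preorder_subtrees[OF assms(2)] by auto
  obtain q where q: "q < length (preorder l @ preorder r)" "(preorder l @ preorder r) ! q = y"
    using assms(3) by (metis in_set_conv_nth set_append set_preorder)
  have "idx (preorder t) x = length xs"
    using idx_append_nth[of xs "x # preorder l @ preorder r" ys 0] assms(1) t by auto
  moreover have "idx (preorder t) y = length xs + Suc q"
    using idx_append_nth[of xs "x # preorder l @ preorder r" ys "Suc q"] assms(1) t q by auto
  ultimately show ?thesis by simp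
qed

lemma idx_preorder_left_child:
  assumes "distinct (preorder t)" "Node (Node l c r') x r \<in> subtrees t"
  shows "idx (preorder t) c = Suc (idx (preorder t) x)"
proof -
  obtain xs ys where t: "preorder t = xs @ (x # c # preorder l @ preorder r' @ preorder r) @ ys"
    using preorder_subtrees[OF assms(2)] by auto
  then show ?thesis
    using idx_append_nth[of xs "x # c # preorder l @ preorder r' @ preorder r" ys 0]
      idx_append_nth[of xs "x # c # preorder l @ preorder r' @ preorder r" ys 1] assms(1) by auto
qed

section \<open>The tree pattern around its maximum\<close>

lemma trees_kD:
  assumes "P \<in> trees_k k"
  shows "bst P" "set_tree P = {1..k}" "preorder P \<in> perms k"
proof -
  have inorder: "inorder P = [1..<Suc k]"
    using assms unfolding trees_k_def by simp
  then show "bst P"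
    unfolding bst_iff_sorted_wrt_less by (simp only: sorted_wrt_upt)
  show set: "set_tree P = {1..k}"
    using set_inorder[of P] inorder by auto
  have "distinct (preorder P)"
    using inorder by (metis card_distinct distinct_card distinct_upt length_inorder length_preorder
        set_inorder set_preorder)
  then show "preorder P \<in> perms k"
    using set unfolding perms_iff by simp
qed

lemma Pv_trees_k: "P \<in> trees_k k \<Longrightarrow> j \<in> {1..k} \<Longrightarrow> j \<in> Pv P j \<and> Pv P j \<subseteq> {1..k}"
  using subtree_at_subtrees[of P j] set_tree_subtrees trees_kD unfolding Pv_def by fastforce

lemma BRm_subset_Pv: "BRm P j \<subseteq> Pv P j"
  unfolding BRm_def Pv_def using set_rspine by (fastforce dest: in_set_butlastD)

lemma BRm_right_child:
  assumes "bst P" "m \<in> BRm P j"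
  shows "\<exists>l r. Node l m r \<in> subtrees P \<and> r \<noteq> Leaf"
proof (cases "j \<in> set_tree P")
  case True
  then obtain l r where "subtree_at P j = Node l j r" "Node l j r \<in> subtrees P"
    using subtree_at_subtrees[OF assms(1)] by blast
  then show ?thesis
    using assms(2) butlast_rspine_right_child subtrees_trans unfolding BRm_def by metis
next
  case False
  then show ?thesis
    using assms(2) subtree_at_notin unfolding BRm_def by auto
qed

lemma max_notin_BRm:
  assumes P: "P \<in> trees_k k"
  shows "k \<notin> BRm P j"
proof
  assume "k \<in> BRm P j"
  then obtain l r where sub: "Node l k r \<in> subtrees P" "r \<noteq> Leaf"
    using BRm_right_child trees_kD(1)[OF P] by blast
  then obtain y where "y \<in> set_tree r"
    by (cases r) auto
  then have "k < y" "y \<le> k"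
    using bst_subtrees[OF trees_kD(1)[OF P] sub(1)] set_tree_subtrees[OF sub(1)] trees_kD(2)[OF P]
    by auto
  then show False by simp
qed

lemma max_subtree:
  assumes P: "P \<in> trees_k k" and c: "cL P k = Some c"
  shows "\<exists>l r. Node (Node l c r) k Leaf \<in> subtrees P"
proof -
  have "k \<in> set_tree P"
    using c subtree_at_notin unfolding cL_def by fastforce
  then obtain l r where sub: "subtree_at P k = Node l k r" "Node l k r \<in> subtrees P"
    using subtree_at_subtrees trees_kD(1)[OF P] by blast
  have "r = Leaf"
  proof (rule ccontr)
    assume "r \<noteq> Leaf"
    then obtain y where "y \<in> set_tree r"
      by (cases r) auto
    then show False
      using bst_subtrees[OF trees_kD(1)[OF P] sub(2)] set_tree_subtrees[OF sub(2)] trees_kD(2)[OF P]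
      by fastforce
  qed
  moreover obtain l1 r1 where "l = Node l1 c r1"
    using c sub(1) unfolding cL_def by (cases l) auto
  ultimately show ?thesis
    using sub(2) by blast
qed

lemma pred_max_notin_BRm:
  assumes P: "P \<in> trees_k k" and c: "cL P k = Some c"
  shows "k - 1 \<notin> BRm P j"
proof
  assume "k - 1 \<in> BRm P j"
  then obtain l r where sub: "Node l (k - 1) r \<in> subtrees P" "r \<noteq> Leaf"
    using BRm_right_child trees_kD(1)[OF P] by blast
  then obtain rl y rr where r: "r = Node rl y rr"
    by (cases r) auto
  have bst: "bst (Node l (k - 1) r)"
    using bst_subtrees[OF trees_kD(1)[OF P] sub(1)] .
  then have "y = k"
    using r set_tree_subtrees[OF sub(1)] trees_kD(2)[OF P] by fastforce
  then have "subtree_at P k = Node rl k rr"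
    using subtree_at_eq[OF trees_kD(1)[OF P]] subtrees_trans[OF sub(1)] r by auto
  moreover obtain l1 r1 where "Node (Node l1 c r1) k Leaf \<in> subtrees P"
    using max_subtree[OF P c] by blast
  ultimately have "c \<in> set_tree r"
    using subtree_at_eq[OF trees_kD(1)[OF P]] r by fastforce
  then have "k - 1 < c"
    using bst by auto
  moreover have "c < k"
    using bst_subtrees[OF trees_kD(1)[OF P] \<open>Node (Node l1 c r1) k Leaf \<in> subtrees P\<close>] by auto
  ultimately show False by simp
qed

lemma idx_preorder_max_less:
  assumes P: "P \<in> trees_k k" and c: "cL P k = Some c" and j: "j \<in> {1..k}"
    and Pv: "k - 1 \<in> Pv P j" "k \<notin> Pv P j"
  shows "idx (preorder P) k < idx (preorder P) j"
proof -
  obtain l1 r1 where U: "Node (Node l1 c r1) k Leaf \<in> subtrees P"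
    using max_subtree[OF P c] by blast
  define U where "U = Node (Node l1 c r1) k Leaf"
  obtain lj rj where V: "subtree_at P j = Node lj j rj" "Node lj j rj \<in> subtrees P"
    using subtree_at_subtrees trees_kD[OF P] j by blast
  define V where "V = Node lj j rj"
  have set_V: "set_tree V = Pv P j"
    unfolding Pv_def V(1) V_def ..
  obtain lo hi where "set_tree U = {lo..<hi}"
    using set_tree_subtrees_interval[OF _ U] P unfolding trees_k_def U_def by blast
  moreover have "c \<in> set_tree U" "k \<in> set_tree U" "c < k"
    using bst_subtrees[OF trees_kD(1)[OF P] U] unfolding U_def by auto
  ultimately have "k - 1 \<in> set_tree U"
    by auto
  then have "set_tree V \<inter> set_tree U \<noteq> {}"
    using Pv(1) set_V by blast
  then have "V \<in> subtrees U \<or> U \<in> subtrees V"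
    using subtrees_nested[OF trees_kD(1)[OF P] V(2) U] unfolding U_def V_def by blast
  moreover have "U \<notin> subtrees V"
    using Pv(2) set_V Node_notin_subtrees_if unfolding U_def by metis
  ultimately have "j \<in> set_tree U"
    unfolding V_def by (auto dest: in_set_tree_if)
  moreover have "j \<noteq> k"
    using Pv(2) set_V unfolding V_def by auto
  ultimately show ?thesis
    using idx_preorder_descendant[OF _ U] trees_kD(3)[OF P] unfolding perms_iff U_def by auto
qed

lemma sigma_boxE:
  assumes "(a, b) \<in> snd (sigma k P e)"
  obtains j where "j \<in> {1..k}" "a = idx (preorder P) j" "b \<in> BRm P j"
    | j where "j \<in> {1..k}" "a = idx (preorder P) j" "e j" "b = Min (Pv P j) - 1 \<or> b = Max (Pv P j)"
proof -
  have "\<exists>j \<in> {1..k}. a = idx (preorder P) j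
      \<and> (b \<in> BRm P j \<or> e j \<and> (b = Min (Pv P j) - 1 \<or> b = Max (Pv P j)))"
    using assms unfolding sigma_def Let_def by (auto split: if_splits)
  then show thesis
    using that by blast
qed

lemma sigma_box_bounds:
  assumes P: "P \<in> trees_k k" and ab: "(a, b) \<in> snd (sigma k P e)"
  shows "a < k \<and> b \<le> k"
proof -
  have idx: "idx (preorder P) j < k" if "j \<in> {1..k}" for j
    using idx_in[of j "preorder P"] that trees_kD(3)[OF P] perms_length unfolding perms_iff by force
  have Min_Max: "Min (Pv P j) \<le> k \<and> Max (Pv P j) \<le> k" if "j \<in> {1..k}" for j
  proof -
    have "finite (Pv P j)" "Pv P j \<noteq> {}" "Pv P j \<subseteq> {1..k}"
      using Pv_trees_k[OF P that] finite_subset by auto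
    then show ?thesis
      using Min_in Max_in by fastforce
  qed
  have BRm: "b \<le> k" if "b \<in> BRm P j" "j \<in> {1..k}" for j
    using that BRm_subset_Pv Pv_trees_k[OF P] by fastforce
  show ?thesis
    by (rule sigma_boxE[OF ab]) (use idx Min_Max BRm in fastforce)+
qed

lemma max_box_notin_sigma:
  assumes P: "P \<in> trees_k k" and "\<not> e k"
  shows "(idx (preorder P) k, k) \<notin> snd (sigma k P e)"
proof
  assume box: "(idx (preorder P) k, k) \<in> snd (sigma k P e)"
  have same_idx: "j = k" if "j \<in> {1..k}" "idx (preorder P) k = idx (preorder P) j" for j
    using that idx_in[of j "preorder P"] idx_in[of k "preorder P"] trees_kD(3)[OF P]
    unfolding perms_iff by force
  from box show False
  proof (cases rule: sigma_boxE)
    case (1 j)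
    then have "j = k"
      using same_idx by blast
    then show False
      using 1 max_notin_BRm[OF P] by simp
  next
    case (2 j)
    then have "j = k"
      using same_idx by blast
    then show False
      using 2 \<open>\<not> e k\<close> by simp
  qed
qed

lemma sigma_box_pred_max:
  assumes P: "P \<in> trees_k k" and c: "cL P k = Some c"
    and box: "(a, k - 1) \<in> snd (sigma k P e)"
  shows "idx (preorder P) k < a"
  using box
proof (cases rule: sigma_boxE)
  case (1 j)
  then show ?thesis using pred_max_notin_BRm[OF P c] by auto
next
  case (2 j)
  have Pv: "finite (Pv P j)" "j \<in> Pv P j" "Pv P j \<subseteq> {1..k}"
    using Pv_trees_k[OF P 2(1)] finite_subset by auto
  obtain l1 r1 where U: "Node (Node l1 c r1) k Leaf \<in> subtrees P"
    using max_subtree[OF P c] by blast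
  then have "c < k" "c \<in> Pv P k"
    using bst_subtrees[OF trees_kD(1)[OF P] U] subtree_at_eq[OF trees_kD(1)[OF P] U]
    unfolding Pv_def by auto
  have "k - 1 \<noteq> Min (Pv P j) - 1"
  proof
    assume "k - 1 = Min (Pv P j) - 1"
    moreover have "Min (Pv P j) \<in> {1..k}" "Min (Pv P j) \<le> j"
      using Pv Min_in Min_le by blast+
    ultimately have "j = k" "Min (Pv P j) = k"
      using 2(1) \<open>c < k\<close> by auto
    then show False
      using Min_le[of "Pv P j" c] Pv(1) \<open>c \<in> Pv P k\<close> \<open>c < k\<close> by simp
  qed
  then have "Max (Pv P j) = k - 1"
    using 2 by auto
  then have "k - 1 \<in> Pv P j" "k \<notin> Pv P j"
    using Pv Max_in Max_ge \<open>c < k\<close> by fastforce+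
  then show ?thesis
    using idx_preorder_max_less[OF P c 2(1)] 2(2) by simp
qed

lemma sigma_box_after_max:
  assumes P: "P \<in> trees_k k" and c: "cL P k = Some c" and "\<not> e c"
    and box: "(Suc (idx (preorder P) k), b) \<in> snd (sigma k P e)"
  shows "preorder P ! Suc (idx (preorder P) k) = c \<and> c \<le> b \<and> b + 2 \<le> k"
proof -
  obtain l1 r1 where U: "Node (Node l1 c r1) k Leaf \<in> subtrees P"
    using max_subtree[OF P c] by blast
  have distinct: "distinct (preorder P)"
    using trees_kD(3)[OF P] unfolding perms_iff ..
  have idx_c: "idx (preorder P) c = Suc (idx (preorder P) k)"
    using idx_preorder_left_child[OF distinct U] .
  have c_in: "c \<in> set (preorder P)"
    using set_tree_subtrees[OF U] by auto
  have "b \<in> BRm P c"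
    using box
  proof (cases rule: sigma_boxE)
    case (1 j)
    then show ?thesis
      using idx_c idx_in[of j "preorder P"] idx_in[OF c_in] trees_kD(3)[OF P]
      unfolding perms_iff by force
  next
    case (2 j)
    then show ?thesis
      using idx_c idx_in[of j "preorder P"] idx_in[OF c_in] trees_kD(3)[OF P] \<open>\<not> e c\<close>
      unfolding perms_iff by force
  qed
  moreover have "subtree_at P c = Node l1 c r1"
    using subtree_at_eq[OF trees_kD(1)[OF P]] subtrees_trans[OF U] by auto
  ultimately have "b = c \<or> b \<in> set_tree r1"
    using set_rspine[of r1] unfolding BRm_def by (auto dest: in_set_butlastD split: if_splits)
  then have "c \<le> b" "b < k"
    using bst_subtrees[OF trees_kD(1)[OF P] U] by auto
  moreover have "b \<noteq> k - 1"
    using pred_max_notin_BRm[OF P c] \<open>b \<in> BRm P c\<close> by auto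
  moreover have "preorder P ! Suc (idx (preorder P) k) = c"
    using idx_in[OF c_in] idx_c by simp
  ultimately show ?thesis
    by auto
qed

lemma contains_sigma_iff_sigma_minus:
  assumes P: "P \<in> trees_k k" and "friendly k P e"
    and \<pi>: "\<pi> \<in> perms n" and no231: "\<not> contains \<pi> p231"
  shows "contains \<pi> (sigma k P e) \<longleftrightarrow> contains \<pi> (sigma_minus k P e)"
proof -
  define \<tau> where "\<tau> = preorder P"
  define C where "C = snd (sigma k P e)"
  define p where "p = idx \<tau> k"
  have "fst (sigma k P e) = \<tau>"
    unfolding \<tau>_def sigma_def Let_def by simp
  then have sigma: "sigma k P e = (\<tau>, C)" "sigma_minus k P e = (\<tau>, C - {(p, k)})"
    unfolding C_def p_def sigma_minus_def \<tau>_def by (metis prod.collapse)+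
  obtain c where c: "cL P k = Some c" and e_c: "e k \<Longrightarrow> \<not> e c"
    using assms(2) unfolding friendly_def by auto
  show ?thesis
  proof (cases "e k")
    case False
    then have "(p, k) \<notin> C"
      using max_box_notin_sigma[OF P] unfolding C_def \<tau>_def p_def by blast
    then show ?thesis
      unfolding sigma by simp
  next
    case True
    have \<tau>: "\<tau> \<in> perms k"
      unfolding \<tau>_def using trees_kD(3)[OF P] .
    have "k \<in> set \<tau>"
      using max_subtree[OF P c] set_tree_subtrees unfolding \<tau>_def by fastforce
    then have p: "p < k" "\<tau> ! p = k"
      using idx_in perms_length[OF \<tau>] unfolding p_def by auto
    have "contains \<pi> (\<tau>, insert (p, k) (C - {(p, k)}))" if "contains \<pi> (\<tau>, C - {(p, k)})"
    proof (rule contains_insert_max_box[OF \<pi> \<tau> p no231 _ _ _ that])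
      show "a < k \<and> b \<le> k" if "(a, b) \<in> C - {(p, k)}" for a b
        using sigma_box_bounds[OF P, of a b e] that unfolding C_def by blast
      show "p < a" if "(a, k - 1) \<in> C - {(p, k)}" for a
        using sigma_box_pred_max[OF P c, of a e] that unfolding C_def p_def \<tau>_def by blast
      show "\<tau> ! Suc p \<le> b \<and> b + 2 \<le> k" if "(Suc p, b) \<in> C - {(p, k)}" for b
        using sigma_box_after_max[of P k c e b] P c e_c[OF True] that
        unfolding C_def p_def \<tau>_def by blast
    qed
    moreover have "C \<subseteq> insert (p, k) (C - {(p, k)})" "C - {(p, k)} \<subseteq> C"
      by auto
    ultimately show ?thesis
      unfolding sigma using contains_antimono by blast
  qed
qed

theorem lemma9:
  fixes k :: nat and P :: "nat tree" and e :: "nat \<Rightarrow> bool"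
  assumes "P \<in> trees_k k"
    and "friendly k P e"
  shows "\<forall>n. avoiders n p231 (sigma k P e) = avoiders n p231 (sigma_minus k P e)"
  using contains_sigma_iff_sigma_minus[OF assms] unfolding avoiders_def by blast

end
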